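(* Let $a>4$, $d\ge 4$, and let $G$ be generated by the security model $\mathcal{S}(n,a,d)$. Let $b_0>0$ be a constant, $\delta=\log^{-b_0}n$, $T_0=(1-\delta)n$, and let $b_1$ satisfy $2<b_1<a-b_0$. Then with probability $1-o(1)$, every homochromatic set created before time step $T_0$ has size $\Omega(\log^{b_1}n)$.
   Context: Security model $\mathcal{S}(n,a,d)$ (homophyly exponent $a$, natural number $d$): start with an initial graph $G_2$ on two nodes, each of which is a seed node with its own distinct color. For $i=3,\dots,n$, given $G_{i-1}$, let $p_i=(\log i)^{-a}$ and create a new node $v$ (at time step $i$). With probability $p_i$, $v$ receives a brand-new color $c$ and is called the seed node of $c$; then one edge $(v,u)$ is added with $u$ chosen with probability proportional to degrees in $G_{i-1}$, and $d-1$ edges $(v,u_j)$ are added, each $u_j$ chosen uniformly at random among all seed nodes of $G_{i-1}$. Otherwise, $v$ picks a color $c$ uniformly at random among all colors present in $G_{i-1}$, takes color $c$, and $d$ edges $(v,u_j)$ are added, each $u_j$ chosen with probability proportional to degree among the nodes of color $c$ in $G_{i-1}$. The network is $G=G_n$. A homochromatic set is the set of all nodes of $G$ of one color; it is created at the time step its seed node is created. *)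

theory Defs
  imports "HOL-Probability.Probability"
begin

text \<open>State of the security model after time step i: nodes are 1..i.
  The colour of a node is identified with the time step (= node index) at which
  the seed node of that colour was created; hence v is a seed node iff col v = v.
  Edges are kept as a list (multigraph); the degree of a node is its number of
  occurrences among edge endpoints.\<close>

type_synonym sstate = "(nat \<Rightarrow> nat) \<times> (nat \<times> nat) list"

definition endpoints :: "(nat \<times> nat) list \<Rightarrow> nat multiset" where
  "endpoints E = mset (map fst E) + mset (map snd E)"

fun iid_pmf :: "nat \<Rightarrow> 'a pmf \<Rightarrow> 'a list pmf" where
  "iid_pmf 0 p = return_pmf []"
| "iid_pmf (Suc k) p = p \<bind> (\<lambda>x. iid_pmf k p \<bind> (\<lambda>xs. return_pmf (x # xs)))"

definition sinit :: sstate where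
  "sinit = ((\<lambda>v. v), [(1, 2)])"

definition sstep :: "real \<Rightarrow> nat \<Rightarrow> nat \<Rightarrow> sstate \<Rightarrow> sstate pmf" where
  "sstep a d i S = (case S of (col, E) \<Rightarrow>
     bernoulli_pmf ((ln (real i)) powr (- a)) \<bind> (\<lambda>newcol.
       if newcol then
         pmf_of_multiset (endpoints E) \<bind> (\<lambda>u.
         iid_pmf (d - 1) (pmf_of_set {v \<in> {1..<i}. col v = v}) \<bind> (\<lambda>us.
         return_pmf (col(i := i), E @ map (\<lambda>w. (i, w)) (u # us))))
       else
         pmf_of_set (col ` {1..<i}) \<bind> (\<lambda>c.
         iid_pmf d (pmf_of_multiset (filter_mset (\<lambda>v. col v = c) (endpoints E))) \<bind> (\<lambda>us.
         return_pmf (col(i := c), E @ map (\<lambda>w. (i, w)) us)))))"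

primrec secmodel :: "real \<Rightarrow> nat \<Rightarrow> nat \<Rightarrow> sstate pmf" where
  "secmodel a d 0 = return_pmf sinit"
| "secmodel a d (Suc m) =
     (if Suc m \<le> 2 then return_pmf sinit else secmodel a d m \<bind> sstep a d (Suc m))"

end

theory Submission
  imports Defs "HOL-Real_Asymp.Real_Asymp"
begin

text \<open>Fix a budget \<open>B = n / ln n powr g\<close> with \<open>b0 + b1 < g < a\<close>. The expected
  number of colours is at most \<open>2 + (\<Sum>i = 3..n. ln i powr - a) = o(B)\<close>, so by Markov's inequality
  more than \<open>B\<close> colours appear only with probability \<open>o(1)\<close>. For a colour \<open>c\<close> created before
  \<open>t = (1 - ln n powr - b0) n\<close> consider the potential \<open>exp (- |c|)\<close>, cut off to 0 once there are
  more than \<open>B\<close> colours. In every later step no new colour is born with probability at least \<open>1/2\<close>,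
  and then \<open>c\<close> is chosen with probability at least \<open>1/B\<close>, which multiplies the potential by
  \<open>1/e\<close>; so its expectation shrinks by the factor \<open>1 - 1/(4B)\<close> per step. Markov's inequality and
  a union bound over the at most \<open>n\<close> old colours bound the probability that some old colour has
  fewer than \<open>ln n powr b1\<close> members by \<open>n * exp (ln n powr b1 - ln n powr (g - b0) / 4) = o(1)\<close>.\<close>

lemma pmf_Markov_inequality:
  fixes M :: "'a pmf" and f :: "'a \<Rightarrow> real"
  assumes "\<And>x. 0 \<le> f x" "(\<integral>\<^sup>+x. f x \<partial>M) \<le> ennreal U" "0 \<le> U" "0 < t"
    and "\<And>x. x \<in> A \<Longrightarrow> t \<le> f x"
  shows "measure_pmf.prob M A \<le> U / t"
proof -
  have "ennreal (t * measure_pmf.prob M A) = (\<integral>\<^sup>+x. ennreal t * indicator A x \<partial>M)"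
    using assms(4)
    by (simp add: measure_pmf.emeasure_eq_measure ennreal_mult nn_integral_cmult_indicator)
  also have "\<dots> \<le> (\<integral>\<^sup>+x. f x \<partial>M)"
    using assms(5) by (intro nn_integral_mono) (auto simp: indicator_def intro: ennreal_leI)
  also note assms(2)
  finally have "t * measure_pmf.prob M A \<le> U" using assms(3) by simp
  then show ?thesis using assms(4) by (simp add: field_simps)
qed

definition colour_step :: "real \<Rightarrow> nat \<Rightarrow> (nat \<Rightarrow> nat) \<Rightarrow> (nat \<Rightarrow> nat) pmf" where
  "colour_step a i col =
     bernoulli_pmf (ln (real i) powr - a) \<bind> (\<lambda>new.
       if new then return_pmf (col(i := i))
       else map_pmf (\<lambda>c. col(i := c)) (pmf_of_set (col ` {1..<i})))"

primrec colour_process :: "real \<Rightarrow> nat \<Rightarrow> (nat \<Rightarrow> nat) pmf" where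
  "colour_process a 0 = return_pmf (\<lambda>v. v)"
| "colour_process a (Suc m) =
     (if Suc m \<le> 2 then return_pmf (\<lambda>v. v) else colour_process a m \<bind> colour_step a (Suc m))"

lemma map_pmf_fst_sstep: "map_pmf fst (sstep a d i S) = colour_step a i (fst S)"
proof (cases S)
  case (Pair col E)
  show ?thesis
    unfolding Pair sstep_def colour_step_def
    by (auto simp: map_bind_pmf map_pmf_comp map_pmf_def[symmetric] intro!: bind_pmf_cong)
qed

lemma map_pmf_fst_secmodel: "map_pmf fst (secmodel a d m) = colour_process a m"
  by (induction m) (simp_all add: sinit_def map_bind_pmf map_pmf_fst_sstep bind_map_pmf[symmetric])

lemma prob_secmodel_colour_event:
  "measure_pmf.prob (secmodel a d n) (fst -` A) = measure_pmf.prob (colour_process a n) A"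
  by (simp flip: measure_map_pmf add: map_pmf_fst_secmodel)

lemma nn_integral_colour_step:
  fixes h :: "(nat \<Rightarrow> nat) \<Rightarrow> real"
  assumes "1 \<le> m" "ln (real (Suc m)) powr - a \<le> 1" "\<And>x. 0 \<le> h x"
  shows "(\<integral>\<^sup>+x. h x \<partial>colour_step a (Suc m) col) =
    ennreal (ln (real (Suc m)) powr - a * h (col(Suc m := Suc m)) + (1 - ln (real (Suc m)) powr - a) *
       ((\<Sum>c\<in>col ` {1..m}. h (col(Suc m := c))) / card (col ` {1..m})))"
proof -
  define p where "p = ln (real (Suc m)) powr - a"
  define X where "X = col ` {1..m}"
  have "0 \<le> p" by (simp add: p_def)
  have X: "finite X" "X \<noteq> {}" "card X > 0"
    using assms(1) by (auto simp: X_def card_gt_0_iff)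
  have "(\<integral>\<^sup>+x. h x \<partial>colour_step a (Suc m) col) =
      ennreal (h (col(Suc m := Suc m))) * ennreal p
      + (\<Sum>c\<in>X. ennreal (h (col(Suc m := c)))) / ennreal (card X) * ennreal (1 - p)"
    using \<open>0 \<le> p\<close> assms(2) X
    unfolding colour_step_def atLeastLessThanSuc_atLeastAtMost p_def[symmetric] X_def[symmetric]
    by (simp add: nn_integral_pmf_of_set nn_integral_return ennreal_of_nat_eq_real_of_nat)
  also have "\<dots> = ennreal (p * h (col(Suc m := Suc m))
      + (1 - p) * ((\<Sum>c\<in>X. h (col(Suc m := c))) / card X))"
    using \<open>0 \<le> p\<close> assms(2,3) X unfolding p_def[symmetric]
    by (simp add: sum_nonneg divide_ennreal ennreal_mult'[symmetric] ennreal_plus[symmetric]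
        mult.commute del: ennreal_plus)
  finally show ?thesis unfolding p_def X_def .
qed

lemma nn_integral_colour_process_le:
  fixes f :: "nat \<Rightarrow> (nat \<Rightarrow> nat) \<Rightarrow> ennreal"
  assumes "2 \<le> m0" "m0 \<le> n" "r \<le> 1"
    and drift: "\<And>m col. m0 \<le> m \<Longrightarrow>
      (\<integral>\<^sup>+x. f (Suc m) x \<partial>colour_step a (Suc m) col) \<le> r * f m col + s (Suc m)"
  shows "(\<integral>\<^sup>+x. f n x \<partial>colour_process a n)
    \<le> r ^ (n - m0) * (\<integral>\<^sup>+x. f m0 x \<partial>colour_process a m0) + (\<Sum>i\<in>{Suc m0..n}. s i)"
  using \<open>m0 \<le> n\<close>
proof (induction n rule: dec_induct)
  case base
  show ?case by simp
next
  case (step m)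
  define I0 where "I0 = (\<integral>\<^sup>+x. f m0 x \<partial>colour_process a m0)"
  define S where "S = (\<Sum>i\<in>{Suc m0..m}. s i)"
  have "(\<integral>\<^sup>+x. f (Suc m) x \<partial>colour_process a (Suc m))
      = (\<integral>\<^sup>+col. (\<integral>\<^sup>+x. f (Suc m) x \<partial>colour_step a (Suc m) col) \<partial>colour_process a m)"
    using step.hyps assms(1) by simp
  also have "\<dots> \<le> (\<integral>\<^sup>+col. r * f m col + s (Suc m) \<partial>colour_process a m)"
    using step.hyps by (intro nn_integral_mono drift) simp
  also have "\<dots> = r * (\<integral>\<^sup>+x. f m x \<partial>colour_process a m) + s (Suc m)"
    by (simp add: nn_integral_add nn_integral_cmult measure_pmf.emeasure_space_1)
  also have "\<dots> \<le> r * (r ^ (m - m0) * I0 + S) + s (Suc m)"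
    using step.IH unfolding I0_def S_def by (intro add_right_mono mult_left_mono) auto
  also have "\<dots> \<le> r ^ (Suc m - m0) * I0 + (S + s (Suc m))"
  proof -
    have "r * S \<le> S" using mult_right_mono[of r 1 S] \<open>r \<le> 1\<close> by simp
    then show ?thesis
      using step.hyps by (simp add: distrib_left Suc_diff_le mult.assoc add.assoc add_right_mono)
  qed
  also have "S + s (Suc m) = (\<Sum>i\<in>{Suc m0..Suc m}. s i)"
    using step.hyps unfolding S_def by simp
  finally show ?case unfolding I0_def .
qed

definition class_size :: "nat \<Rightarrow> (nat \<Rightarrow> nat) \<Rightarrow> nat \<Rightarrow> nat" where
  "class_size c col m = card {v \<in> {1..m}. col v = c}"

definition num_colours :: "(nat \<Rightarrow> nat) \<Rightarrow> nat \<Rightarrow> nat" where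
  "num_colours col m = card (col ` {1..m})"

lemma class_size_fun_upd_Suc:
  "class_size c (col(Suc m := x)) (Suc m) = class_size c col m + (if x = c then 1 else 0)"
proof -
  have "{v \<in> {1..Suc m}. (col(Suc m := x)) v = c}
      = {v \<in> {1..m}. col v = c} \<union> (if x = c then {Suc m} else {})"
    by auto
  then show ?thesis unfolding class_size_def by (simp add: card_insert_if)
qed

lemma num_colours_fun_upd_Suc:
  "num_colours (col(Suc m := x)) (Suc m) = card (insert x (col ` {1..m}))"
proof -
  have "(col(Suc m := x)) ` {1..Suc m} = insert x (col ` {1..m})" by auto
  then show ?thesis unfolding num_colours_def by simp
qed

lemma num_colours_le_fun_upd_Suc: "num_colours col m \<le> num_colours (col(Suc m := x)) (Suc m)"
  unfolding num_colours_fun_upd_Suc num_colours_def by (intro card_mono) auto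

lemma ln_powr_neg_le_one:
  assumes "3 \<le> i" "0 \<le> a"
  shows "ln (real i) powr - a \<le> 1"
proof -
  have "exp 1 \<le> real i" using exp_le assms(1) by linarith
  then have "1 \<le> ln (real i)" using ln_le_cancel_iff[of "exp 1" "real i"] assms(1) by simp
  then have "ln (real i) powr - a \<le> 1 powr - a" using assms(2) by (intro powr_mono2') auto
  then show ?thesis by simp
qed

lemma ln_powr_neg_le_half:
  assumes "9 \<le> i" "1 \<le> a"
  shows "ln (real i) powr - a \<le> 1 / 2"
proof -
  have "exp 2 = exp (1::real) * exp 1" by (simp flip: exp_add)
  also have "\<dots> \<le> real i" using exp_le assms(1) mult_mono[of "exp 1" 3 "exp 1" "3 :: real"] by simp
  finally have "2 \<le> ln (real i)" using ln_le_cancel_iff[of "exp 2" "real i"] assms(1) by simp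
  then have "ln (real i) powr - a \<le> 2 powr - a" using assms(2) by (intro powr_mono2') auto
  also have "\<dots> \<le> 2 powr - 1" using assms(2) by (intro powr_mono) auto
  finally show ?thesis by simp
qed

lemma sum_ln_powr_neg_le:
  assumes "3 \<le> n" "0 \<le> a"
  shows "(\<Sum>i = 3..n. ln (real i) powr - a) \<le> sqrt n + n * (ln n / 2) powr - a"
proof -
  define q where "q = (ln n / 2) powr - a"
  have summand: "ln (real i) powr - a \<le> (if real i \<le> sqrt n then 1 else 0) + q" if "i \<in> {3..n}" for i
  proof (cases "real i \<le> sqrt n")
    case True
    moreover have "0 \<le> q" by (simp add: q_def)
    ultimately show ?thesis using ln_powr_neg_le_one[of i a] that assms(2) by simp
  next
    case False
    then have "ln (sqrt n) \<le> ln (real i)" using assms(1) that by (subst ln_le_cancel_iff) auto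
    then have "ln n / 2 \<le> ln (real i)" using assms(1) by (simp add: ln_sqrt)
    then have "ln (real i) powr - a \<le> q" unfolding q_def using assms by (intro powr_mono2') auto
    then show ?thesis using False by simp
  qed
  have small: "card {i \<in> {3..n}. real i \<le> sqrt n} \<le> sqrt n"
  proof -
    have "{i \<in> {3..n}. real i \<le> sqrt n} \<subseteq> {1..nat \<lfloor>sqrt n\<rfloor>}" by (auto simp: le_nat_floor)
    then have "card {i \<in> {3..n}. real i \<le> sqrt n} \<le> nat \<lfloor>sqrt n\<rfloor>"
      using card_mono[of "{1..nat \<lfloor>sqrt n\<rfloor>}"] by fastforce
    moreover have "real (nat \<lfloor>sqrt n\<rfloor>) \<le> sqrt n" by simp
    ultimately show ?thesis by (meson of_nat_le_iff order_trans)
  qed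
  have "(\<Sum>i = 3..n. ln (real i) powr - a) \<le> (\<Sum>i = 3..n. (if real i \<le> sqrt n then 1 else 0) + q)"
    by (intro sum_mono summand)
  also have "\<dots> = card {i \<in> {3..n}. real i \<le> sqrt n} + card {3..n} * q"
    by (simp add: sum.distrib sum.If_cases Int_def)
  also have "\<dots> \<le> sqrt n + n * q"
    using small by (intro add_mono mult_right_mono) (auto simp: q_def)
  finally show ?thesis unfolding q_def .
qed

lemma nn_integral_num_colours_step:
  assumes "2 \<le> m" "0 \<le> a"
  shows "(\<integral>\<^sup>+x. ennreal (num_colours x (Suc m)) \<partial>colour_step a (Suc m) col)
    \<le> ennreal (num_colours col m) + ennreal (ln (real (Suc m)) powr - a)"
proof -
  define p where "p = ln (real (Suc m)) powr - a"
  define X where "X = col ` {1..m}"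
  have p: "0 \<le> p" "p \<le> 1" using ln_powr_neg_le_one[of "Suc m" a] assms by (auto simp: p_def)
  have "card X > 0" using assms(1) by (auto simp: X_def card_gt_0_iff)
  have old: "num_colours (col(Suc m := x)) (Suc m) = num_colours col m" if "x \<in> X" for x
    unfolding num_colours_fun_upd_Suc insert_absorb[OF that[unfolded X_def]]
    by (simp add: num_colours_def)
  have new: "num_colours (col(Suc m := Suc m)) (Suc m) \<le> num_colours col m + 1"
    unfolding num_colours_fun_upd_Suc by (simp add: num_colours_def card_insert_if)
  have "(\<integral>\<^sup>+x. ennreal (num_colours x (Suc m)) \<partial>colour_step a (Suc m) col)
      = ennreal (p * num_colours (col(Suc m := Suc m)) (Suc m)
          + (1 - p) * ((\<Sum>x\<in>X. real (num_colours (col(Suc m := x)) (Suc m))) / card X))"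
    using assms p unfolding p_def X_def by (intro nn_integral_colour_step) auto
  also have "\<dots> \<le> ennreal (p * (num_colours col m + 1) + (1 - p) * num_colours col m)"
    using p new \<open>card X > 0\<close> by (intro ennreal_leI add_mono mult_left_mono) (auto simp: old)
  also have "\<dots> = ennreal (num_colours col m) + ennreal p"
    using p by (simp add: algebra_simps flip: ennreal_plus)
  finally show ?thesis unfolding p_def .
qed

lemma nn_integral_num_colours_le:
  assumes "0 \<le> a" "2 \<le> n"
  shows "(\<integral>\<^sup>+x. ennreal (num_colours x n) \<partial>colour_process a n)
    \<le> ennreal (2 + (\<Sum>i = 3..n. ln (real i) powr - a))"
proof -
  have "(\<integral>\<^sup>+x. ennreal (num_colours x n) \<partial>colour_process a n)
      \<le> 1 ^ (n - 2) * (\<integral>\<^sup>+x. ennreal (num_colours x 2) \<partial>colour_process a 2)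
        + (\<Sum>i = Suc 2..n. ennreal (ln (real i) powr - a))"
    using assms nn_integral_num_colours_step[OF _ assms(1)]
    by (intro nn_integral_colour_process_le[where f = "\<lambda>m x. ennreal (num_colours x m)"]) auto
  also have "(\<integral>\<^sup>+x. ennreal (num_colours x 2) \<partial>colour_process a 2) = 2"
    by (simp add: numeral_2_eq_2 num_colours_def nn_integral_return)
  finally show ?thesis by (simp add: sum_nonneg)
qed

definition class_potential :: "real \<Rightarrow> nat \<Rightarrow> nat \<Rightarrow> (nat \<Rightarrow> nat) \<Rightarrow> real" where
  "class_potential B c m col =
     (if col c = c \<and> real (num_colours col m) \<le> B then exp (- real (class_size c col m)) else 0)"

lemma potential_average_le:
  fixes p k B E S :: real
  assumes "0 \<le> p" "p \<le> 1 / 2" "1 \<le> k" "k \<le> B" "0 \<le> E" "x \<le> E" "S \<le> E * (k - 1 + exp (- 1))"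
  shows "p * x + (1 - p) * (S / k) \<le> (1 - 1 / (4 * B)) * E"
proof -
  have "exp (- 1) \<le> (1 / 2 :: real)"
    using exp_ge_add_one_self[of 1] by (simp add: exp_minus field_simps)
  have "S / k \<le> E * (k - 1 + exp (- 1)) / k"
    using assms(3,7) by (intro divide_right_mono) auto
  also have "\<dots> = E - E * (1 - exp (- 1)) / k"
    using assms(3) by (simp add: field_simps)
  also have "\<dots> \<le> E - E * (1 / 2) / k"
    using \<open>exp (- 1) \<le> 1 / 2\<close> assms(3,5) by (intro diff_left_mono divide_right_mono mult_left_mono) auto
  also have "\<dots> \<le> E - E / (2 * B)"
    using assms(3-5) divide_left_mono[of "2 * k" "2 * B" E] by simp
  finally have "p * x + (1 - p) * (S / k) \<le> p * E + (1 - p) * (E - E / (2 * B))"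
    using assms(1,2,6) by (intro add_mono mult_left_mono) auto
  also have "\<dots> \<le> (1 - 1 / (4 * B)) * E"
    using assms(1-5) mult_right_mono[of "1/2" "1 - p" "E / (2 * B)"] by (simp add: field_simps)
  finally show ?thesis .
qed

lemma nn_integral_class_potential_step:
  assumes "1 \<le> a" "1 \<le> B" "c \<in> {1..m}" "8 \<le> m"
  shows "(\<integral>\<^sup>+x. class_potential B c (Suc m) x \<partial>colour_step a (Suc m) col)
    \<le> ennreal (1 - 1 / (4 * B)) * class_potential B c m col"
proof -
  define p where "p = ln (real (Suc m)) powr - a"
  define X where "X = col ` {1..m}"
  have p: "0 \<le> p" "p \<le> 1 / 2" using ln_powr_neg_le_half[of "Suc m" a] assms by (auto simp: p_def)
  have "(\<integral>\<^sup>+x. class_potential B c (Suc m) x \<partial>colour_step a (Suc m) col)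
      = ennreal (p * class_potential B c (Suc m) (col(Suc m := Suc m))
          + (1 - p) * ((\<Sum>x\<in>X. class_potential B c (Suc m) (col(Suc m := x))) / card X))"
    using assms p unfolding p_def X_def by (intro nn_integral_colour_step) (auto simp: class_potential_def)
  also have "\<dots> \<le> ennreal ((1 - 1 / (4 * B)) * class_potential B c m col)"
  proof (cases "col c = c \<and> real (num_colours col m) \<le> B")
    case False
    then have "class_potential B c (Suc m) (col(Suc m := x)) = 0" for x
      using num_colours_le_fun_upd_Suc[of col m x] assms(3) by (auto simp: class_potential_def)
    then show ?thesis by simp
  next
    case True
    define E where "E = exp (- real (class_size c col m))"
    have new: "class_potential B c (Suc m) (col(Suc m := x)) \<le> E * (if x = c then exp (- 1) else 1)" for x
      using assms(3)
      by (auto simp: class_potential_def class_size_fun_upd_Suc E_def exp_diff exp_minus divide_inverse)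
    have X: "finite X" "c \<in> X" "card X \<le> B"
      using True assms(3) by (auto simp: X_def num_colours_def intro: rev_image_eqI)
    then have "1 \<le> card X" by (simp add: Suc_le_eq card_gt_0_iff) blast
    have "(\<Sum>x\<in>X. class_potential B c (Suc m) (col(Suc m := x)))
        \<le> (\<Sum>x\<in>X. E * (if x = c then exp (- 1) else 1))"
      by (intro sum_mono new)
    also have "\<dots> = E * exp (- 1) + E * (card X - 1)"
      using X by (simp add: sum.remove[of X c] card_Diff_singleton \<open>1 \<le> card X\<close>)
    finally have "(\<Sum>x\<in>X. class_potential B c (Suc m) (col(Suc m := x))) \<le> E * (card X - 1 + exp (- 1))"
      by (simp add: algebra_simps)
    moreover have "class_potential B c m col = E"
      using True by (simp add: class_potential_def E_def)
    ultimately show ?thesis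
      using new[of "Suc m"] assms(3) p X \<open>1 \<le> card X\<close>
      by (intro ennreal_leI potential_average_le) (auto simp: E_def)
  qed
  also have "\<dots> = ennreal (1 - 1 / (4 * B)) * class_potential B c m col"
    using assms(2) by (intro ennreal_mult) (auto simp: class_potential_def)
  finally show ?thesis .
qed

lemma nn_integral_class_potential_le:
  assumes "1 \<le> a" "1 \<le> B" "c \<in> {1..m0}" "8 \<le> m0" "m0 \<le> n"
  shows "(\<integral>\<^sup>+x. class_potential B c n x \<partial>colour_process a n) \<le> ennreal ((1 - 1 / (4 * B)) ^ (n - m0))"
proof -
  have "(\<integral>\<^sup>+x. class_potential B c n x \<partial>colour_process a n)
      \<le> ennreal (1 - 1 / (4 * B)) ^ (n - m0) * (\<integral>\<^sup>+x. class_potential B c m0 x \<partial>colour_process a m0)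
        + (\<Sum>i = Suc m0..n. 0)"
    using assms nn_integral_class_potential_step[OF assms(1,2)]
    by (intro nn_integral_colour_process_le[where f = "\<lambda>m x. ennreal (class_potential B c m x)"]) auto
  also have "(\<integral>\<^sup>+x. class_potential B c m0 x \<partial>colour_process a m0) \<le> (\<integral>\<^sup>+x. 1 \<partial>colour_process a m0)"
    by (intro nn_integral_mono) (simp add: class_potential_def)
  finally show ?thesis
    using assms(2) by (simp add: measure_pmf.emeasure_space_1 ennreal_power mult_left_mono)
qed

lemma prob_small_class_le:
  assumes "1 \<le> a" "1 \<le> B" "8 \<le> m0" "m0 \<le> n"
  shows "measure_pmf.prob (colour_process a n)
      {col. \<exists>c\<in>{1..m0}. col c = c \<and> real (class_size c col n) < y}
    \<le> (2 + sqrt n + n * (ln n / 2) powr - a) / B + m0 * (1 - 1 / (4 * B)) ^ (n - m0) * exp y"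
proof -
  let ?P = "measure_pmf.prob (colour_process a n)"
  define many where "many = {col. B \<le> real (num_colours col n)}"
  define small where "small c = {col. exp (- y) \<le> class_potential B c n col}" for c
  have "{col. \<exists>c\<in>{1..m0}. col c = c \<and> real (class_size c col n) < y} \<subseteq> many \<union> (\<Union>c\<in>{1..m0}. small c)"
    by (auto simp: many_def small_def class_potential_def)
  then have "?P {col. \<exists>c\<in>{1..m0}. col c = c \<and> real (class_size c col n) < y}
      \<le> ?P (many \<union> (\<Union>c\<in>{1..m0}. small c))"
    by (intro measure_pmf.finite_measure_mono) auto
  also have "\<dots> \<le> ?P many + ?P (\<Union>c\<in>{1..m0}. small c)"
    by (intro measure_Un_le) auto
  also have "\<dots> \<le> ?P many + (\<Sum>c\<in>{1..m0}. ?P (small c))"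
    by (intro add_left_mono measure_pmf.finite_measure_subadditive_finite) auto
  finally have union_bound: "?P {col. \<exists>c\<in>{1..m0}. col c = c \<and> real (class_size c col n) < y}
      \<le> ?P many + (\<Sum>c\<in>{1..m0}. ?P (small c))" .
  have "?P many \<le> (2 + (\<Sum>i = 3..n. ln (real i) powr - a)) / B"
    using assms nn_integral_num_colours_le[of a n] sum_nonneg[of "{3..n}" "\<lambda>i. ln (real i) powr - a"]
    by (intro pmf_Markov_inequality[where f = "\<lambda>col. num_colours col n"]) (auto simp: many_def)
  also have "\<dots> \<le> (2 + sqrt n + n * (ln n / 2) powr - a) / B"
    using assms sum_ln_powr_neg_le[of n a] by (intro divide_right_mono) auto
  finally have many_bound: "?P many \<le> (2 + sqrt n + n * (ln n / 2) powr - a) / B" .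
  have "?P (small c) \<le> (1 - 1 / (4 * B)) ^ (n - m0) / exp (- y)" if "c \<in> {1..m0}" for c
  proof (rule pmf_Markov_inequality[where f = "class_potential B c n"])
    show "(\<integral>\<^sup>+x. class_potential B c n x \<partial>colour_process a n) \<le> ennreal ((1 - 1 / (4 * B)) ^ (n - m0))"
      using assms that by (intro nn_integral_class_potential_le) auto
    show "0 \<le> (1 - 1 / (4 * B)) ^ (n - m0)"
      using assms(2) by simp
  qed (simp_all add: small_def class_potential_def)
  then have "(\<Sum>c\<in>{1..m0}. ?P (small c)) \<le> (\<Sum>c\<in>{1..m0}. (1 - 1 / (4 * B)) ^ (n - m0) / exp (- y))"
    by (intro sum_mono)
  also have "\<dots> = m0 * (1 - 1 / (4 * B)) ^ (n - m0) * exp y"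
    by (simp add: exp_minus field_simps)
  finally show ?thesis using union_bound many_bound by linarith
qed

lemma prob_small_class_before_le:
  assumes "1 \<le> a" "1 \<le> B" "8 \<le> t" "t \<le> n"
  shows "measure_pmf.prob (colour_process a n)
      {col. \<exists>c\<in>{1..n}. col c = c \<and> real c < t \<and> real (class_size c col n) < y}
    \<le> (2 + sqrt n + n * (ln n / 2) powr - a) / B + n * exp (y - (n - t) / (4 * B))"
proof -
  define m0 where "m0 = nat \<lfloor>t\<rfloor>"
  have m0: "8 \<le> m0" "m0 \<le> n" "real m0 \<le> t"
    using assms(3,4) by (auto simp: m0_def le_nat_floor nat_le_iff floor_le_iff)
  have "(1 - 1 / (4 * B)) ^ (n - m0) \<le> exp (- (1 / (4 * B))) ^ (n - m0)"
    using assms(2) exp_ge_add_one_self[of "- (1 / (4 * B))"] by (intro power_mono) auto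
  also have "\<dots> = exp (- (real (n - m0) / (4 * B)))"
    by (simp flip: exp_of_nat_mult)
  also have "\<dots> \<le> exp (- ((n - t) / (4 * B)))"
    using assms(2) m0 by (auto intro!: divide_right_mono)
  finally have "m0 * (1 - 1 / (4 * B)) ^ (n - m0) * exp y \<le> n * exp (- ((n - t) / (4 * B))) * exp y"
    using assms(2) m0(2) by (intro mult_right_mono mult_mono) auto
  also have "\<dots> = n * exp (y - (n - t) / (4 * B))"
    by (simp add: mult.assoc flip: exp_add)
  finally have decay: "m0 * (1 - 1 / (4 * B)) ^ (n - m0) * exp y \<le> n * exp (y - (n - t) / (4 * B))" .
  have "{col. \<exists>c\<in>{1..n}. col c = c \<and> real c < t \<and> real (class_size c col n) < y}
      \<subseteq> {col. \<exists>c\<in>{1..m0}. col c = c \<and> real (class_size c col n) < y}"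
    by (auto simp: m0_def le_nat_floor)
  then have "measure_pmf.prob (colour_process a n)
      {col. \<exists>c\<in>{1..n}. col c = c \<and> real c < t \<and> real (class_size c col n) < y}
    \<le> measure_pmf.prob (colour_process a n)
      {col. \<exists>c\<in>{1..m0}. col c = c \<and> real (class_size c col n) < y}"
    by (intro measure_pmf.finite_measure_mono) auto
  also have "\<dots> \<le> (2 + sqrt n + n * (ln n / 2) powr - a) / B + m0 * (1 - 1 / (4 * B)) ^ (n - m0) * exp y"
    using assms m0 by (intro prob_small_class_le) auto
  finally show ?thesis using decay by linarith
qed

lemma prob_small_old_class_tendsto_0:
  assumes "1 \<le> a" "0 < b0" "1 < b1" "b1 < a - b0"
  shows "(\<lambda>n. measure_pmf.prob (colour_process a n)
      {col. \<exists>c\<in>{1..n}. col c = c \<and> real c < (1 - ln n powr - b0) * n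
        \<and> real (class_size c col n) < ln n powr b1})
    \<longlonglongrightarrow> 0" (is "?P \<longlonglongrightarrow> 0")
proof -
  define g where "g = (a + b0 + b1) / 2"
  \<comment> \<open>\<open>g < a\<close>: the budget \<open>B n\<close> dominates the expected number of colours;
    \<open>g - b0 > b1\<close>: the \<open>n * ln n powr - b0\<close> steps after \<open>t n\<close> hit a given old colour
    about \<open>ln n powr (g - b0)\<close> times, more than \<open>ln n powr b1\<close>.\<close>
  have g: "g < a" "b1 < g - b0" using assms by (simp_all add: g_def field_simps)
  define t :: "nat \<Rightarrow> real" where "t n = (1 - ln n powr - b0) * n" for n
  define B :: "nat \<Rightarrow> real" where "B n = n / ln n powr g" for n
  define U where "U n = (2 + sqrt n + n * (ln n / 2) powr - a) / B n
    + n * exp (ln n powr b1 - (n - t n) / (4 * B n))" for n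
  have "filterlim t at_top sequentially" "filterlim B at_top sequentially"
    unfolding t_def B_def using assms g by real_asymp+
  then have "eventually (\<lambda>n. 8 \<le> t n \<and> 1 \<le> B n) sequentially"
    unfolding filterlim_at_top by (intro eventually_conj) auto
  then have upper: "eventually (\<lambda>n. ?P n \<le> U n) sequentially"
  proof eventually_elim
    case (elim n)
    have "t n \<le> n" by (simp add: t_def algebra_simps)
    with elim assms(1) show ?case
      using prob_small_class_before_le[of a "B n" "t n" n "ln n powr b1"] by (simp add: U_def t_def)
  qed
  have U_lim: "U \<longlonglongrightarrow> 0"
    unfolding U_def t_def B_def using assms g by (intro tendsto_add_zero) real_asymp+
  show ?thesis
    by (rule tendsto_sandwich[OF _ upper tendsto_const U_lim]) simp
qed

theorem lemma13:
  fixes a b0 b1 :: real and d :: nat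
  assumes "a > 4" and "d \<ge> 4" and "b0 > 0" and "2 < b1" and "b1 < a - b0"
  shows "\<exists>C>0. (\<lambda>n. measure_pmf.prob (secmodel a d n)
           {G. \<forall>c\<in>{1..n}. fst G c = c \<and> real c < (1 - (ln (real n)) powr (- b0)) * real n
                 \<longrightarrow> C * (ln (real n)) powr b1 \<le> real (card {v\<in>{1..n}. fst G v = c})})
         \<longlonglongrightarrow> 1"
proof -
  define bad where "bad n = {col. \<exists>c\<in>{1..n}. col c = c \<and> real c < (1 - ln n powr - b0) * n
    \<and> real (class_size c col n) < ln n powr b1}" for n
  have bad_lim: "(\<lambda>n. measure_pmf.prob (colour_process a n) (bad n)) \<longlonglongrightarrow> 0"
    unfolding bad_def using assms by (intro prob_small_old_class_tendsto_0) auto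
  have event: "{G. \<forall>c\<in>{1..n}. fst G c = c \<and> real c < (1 - ln n powr - b0) * n
      \<longrightarrow> 1 * ln n powr b1 \<le> real (card {v\<in>{1..n}. fst G v = c})} = fst -` (UNIV - bad n)" for n
    by (force simp: bad_def class_size_def)
  show ?thesis
    using tendsto_diff[OF tendsto_const bad_lim, of 1]
    by (intro exI[of _ 1])
      (unfold event prob_secmodel_colour_event, simp add: measure_pmf.prob_compl[simplified])
qed

end
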